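(* Let $n\ge 2$, $d_1,\dots,d_n\ge 1$, $L_i\in\mathbb{C}^{d_i\times d_i}$ ($i=1,\dots,n$) and $C_{i,i-1}\in\mathbb{C}^{d_i\times d_{i-1}}$ ($i=2,\dots,n$). Assume: (i) each $L_i$ is invertible and diagonalizable, $L_iV_i=V_i\Lambda_i$ with $V_i$ invertible and $\Lambda_i=\mathrm{diag}(\lambda_{i,1},\dots,\lambda_{i,d_i})$; (ii) $\sigma(L_i)\cap\sigma(L_j)=\emptyset$ for all $i\neq j$; (iii) $\|L_1\|<\|L_2\|<\cdots<\|L_n\|\le 1$. Then for every $i\in\{2,\dots,n\}$, every $x=(x_1,\dots,x_n)$ and every $t\ge 0$, $$\Pi_i\circ\mathsf{Lin}^{\circ t}(x)=\sum_{j=1}^{i}(-1)^{i-j}D_{i,j}L_j^t\,\mathsf{pert}_j(x_1,\dots,x_j).$$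
   Context: Each $\mathbb{C}^{d_i}$ carries a fixed norm and matrices the induced operator norm. $\Pi_i(x_1,\dots,x_n)=x_i$; $\mathsf{Lin}(x_1,\dots,x_n)=(L_1x_1,\;L_2x_2+C_{2,1}x_1,\;\dots,\;L_nx_n+C_{n,n-1}x_{n-1})$ and $\mathsf{Lin}^{\circ t}$ is its $t$-fold iterate. Matrices $D_{i,j}\in\mathbb{C}^{d_i\times d_j}$ ($1\le j\le i\le n$) are defined recursively in $i$: $D_{i,i}=I_{d_i}$; for $i\ge 2$ and $1\le j\le i-1$, $\tilde C_{i,j}\in\mathbb{C}^{d_i\times d_j}$ has entries $[\tilde C_{i,j}]_{\ell,m}=[V_i^{-1}C_{i,i-1}D_{i-1,j}V_j]_{\ell,m}(1-\lambda_{j,m}/\lambda_{i,\ell})^{-1}$ and $D_{i,j}=L_i^{-1}V_i\tilde C_{i,j}V_j^{-1}$. The maps $\mathsf{pert}_i:\mathbb{C}^{d_1}\times\cdots\times\mathbb{C}^{d_i}\to\mathbb{C}^{d_i}$ are $\mathsf{pert}_1(x_1)=x_1$ and $\mathsf{pert}_i(x_1,\dots,x_i)=x_i+\sum_{j=1}^{i-1}(-1)^{i-1-j}D_{i,j}\mathsf{pert}_j(x_1,\dots,x_j)$ for $i\ge 2$. *)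

theory Defs
  imports "Jordan_Normal_Form.Spectral_Radius" "Jordan_Normal_Form.Gauss_Jordan_Elimination"
begin

text \<open>Blocks are indexed by i = 1..n (natural numbers); matrix/vector entries are 0-indexed,
  so the eigenvalue lambda_{i,l} of the paper (l = 1..d_i) is lam i (l-1).
  C i stands for C_{i,i-1}.\<close>

definition minv :: "complex mat \<Rightarrow> complex mat" where
  "minv A = the (mat_inverse A)"

definition Lam :: "(nat \<Rightarrow> nat) \<Rightarrow> (nat \<Rightarrow> nat \<Rightarrow> complex) \<Rightarrow> nat \<Rightarrow> complex mat" where
  "Lam d lam i = mat (d i) (d i) (\<lambda>(l, m). if l = m then lam i l else 0)"

definition is_norm_on :: "nat \<Rightarrow> (complex vec \<Rightarrow> real) \<Rightarrow> bool" where
  "is_norm_on d N \<longleftrightarrow>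
     (\<forall>x \<in> carrier_vec d. N x \<ge> 0 \<and> (N x = 0 \<longleftrightarrow> x = 0\<^sub>v d)) \<and>
     (\<forall>x \<in> carrier_vec d. \<forall>a. N (a \<cdot>\<^sub>v x) = cmod a * N x) \<and>
     (\<forall>x \<in> carrier_vec d. \<forall>y \<in> carrier_vec d. N (x + y) \<le> N x + N y)"

definition opnorm :: "nat \<Rightarrow> (complex vec \<Rightarrow> real) \<Rightarrow> complex mat \<Rightarrow> real" where
  "opnorm d N A = Sup {N (A *\<^sub>v x) | x. x \<in> carrier_vec d \<and> N x \<le> 1}"

definition Lin :: "nat \<Rightarrow> (nat \<Rightarrow> complex mat) \<Rightarrow> (nat \<Rightarrow> complex mat)
    \<Rightarrow> (nat \<Rightarrow> complex vec) \<Rightarrow> (nat \<Rightarrow> complex vec)" where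
  "Lin n L C x = (\<lambda>i. if i = 1 then L 1 *\<^sub>v x 1
                      else if 2 \<le> i \<and> i \<le> n then L i *\<^sub>v x i + C i *\<^sub>v x (i - 1)
                      else x i)"

definition Proj :: "nat \<Rightarrow> (nat \<Rightarrow> complex vec) \<Rightarrow> complex vec" where
  "Proj i x = x i"

fun Dmat :: "(nat \<Rightarrow> nat) \<Rightarrow> (nat \<Rightarrow> complex mat) \<Rightarrow> (nat \<Rightarrow> complex mat) \<Rightarrow> (nat \<Rightarrow> complex mat)
    \<Rightarrow> (nat \<Rightarrow> nat \<Rightarrow> complex) \<Rightarrow> nat \<Rightarrow> nat \<Rightarrow> complex mat" where
  "Dmat d L C V lam 0 j = 0\<^sub>m (d 0) (d j)"
| "Dmat d L C V lam (Suc k) j =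
     (let i = Suc k in
      if j = i then 1\<^sub>m (d i)
      else let M = minv (V i) * C i * Dmat d L C V lam k j * V j;
               Ct = mat (d i) (d j) (\<lambda>(l, m). M $$ (l, m) * inverse (1 - lam j m / lam i l))
           in minv (L i) * V i * Ct * minv (V j))"

definition vsum :: "nat \<Rightarrow> (nat \<Rightarrow> complex vec) \<Rightarrow> nat list \<Rightarrow> complex vec" where
  "vsum dm f js = foldr (+) (map f js) (0\<^sub>v dm)"

lemma vsum_cong [fundef_cong]:
  "dm = dm' \<Longrightarrow> js = js' \<Longrightarrow> (\<And>j. j \<in> set js' \<Longrightarrow> f j = g j) \<Longrightarrow> vsum dm f js = vsum dm' g js'"
  unfolding vsum_def by (metis map_cong)

function pert :: "(nat \<Rightarrow> nat) \<Rightarrow> (nat \<Rightarrow> complex mat) \<Rightarrow> (nat \<Rightarrow> complex mat) \<Rightarrow> (nat \<Rightarrow> complex mat)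
    \<Rightarrow> (nat \<Rightarrow> nat \<Rightarrow> complex) \<Rightarrow> nat \<Rightarrow> (nat \<Rightarrow> complex vec) \<Rightarrow> complex vec" where
  "pert d L C V lam i x =
     (if i \<le> 1 then x i
      else x i + vsum (d i) (\<lambda>j. ((-1) ^ (i - 1 - j)) \<cdot>\<^sub>v (Dmat d L C V lam i j *\<^sub>v pert d L C V lam j x)) [1..<i])"
  by pat_completeness auto
termination
  by (relation "measure (\<lambda>(d, L, C, V, lam, i, x). i)") auto

end

theory Submission
  imports Defs
begin

(* For j < i the matrices D_{i,j} solve the Sylvester equations
   L_i D_{i,j} = D_{i,j} L_j + C_{i,i-1} D_{i-1,j}: in the eigenbases V_i, V_j this becomes the
   entrywise scalar equation lambda_{i,l} G_{l,m} = G_{l,m} lambda_{j,m} + M_{l,m}, solvable because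
   the spectra are disjoint. Consequently the recursion x_i <- L_i x_i + C_{i,i-1} x_{i-1} maps the
   j-th term (-1)^(i-j) D_{i,j} L_j^t pert_j of block i together with the j-th term of block i-1 to the
   j-th term at time t+1, the term j = i being propagated by L_i alone; pert is defined precisely so
   that the formula holds at t = 0, and induction on t concludes. *)

declare pert.simps [simp del]

lemma minv_inverse:
  fixes A :: "complex mat"
  assumes A: "A \<in> carrier_mat k k" and inv: "invertible_mat A"
  shows "minv A \<in> carrier_mat k k" "A * minv A = 1\<^sub>m k" "minv A * A = 1\<^sub>m k"
proof -
  obtain B where AB: "A * B = 1\<^sub>m (dim_row A)" "B * A = 1\<^sub>m (dim_row B)"
    using inv unfolding invertible_mat_def inverts_mat_def by blast
  then have "B \<in> carrier_mat k k"
    using A by (metis carrier_matD carrier_matI index_mult_mat(2,3) index_one_mat(2,3))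
  then have "A \<in> Units (ring_mat TYPE(complex) k ())"
    unfolding Units_def using A AB by (auto simp: ring_mat_simps)
  then obtain B' where "mat_inverse A = Some B'"
    using mat_inverse(1)[OF A] by fastforce
  then show "minv A \<in> carrier_mat k k" "A * minv A = 1\<^sub>m k" "minv A * A = 1\<^sub>m k"
    using mat_inverse(2)[OF A] unfolding minv_def by auto
qed

lemma dim_Lam [simp]: "dim_row (Lam d lam i) = d i" "dim_col (Lam d lam i) = d i"
  unfolding Lam_def by auto

lemma Lam_carrier [simp]: "Lam d lam i \<in> carrier_mat (d i) (d i)"
  unfolding Lam_def by auto

lemma index_Lam_mult:
  assumes "A \<in> carrier_mat (d i) nc" and "l < d i" and "m < nc"
  shows "(Lam d lam i * A) $$ (l, m) = lam i l * A $$ (l, m)"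
  using assms unfolding Lam_def
  by (simp add: scalar_prod_def if_distrib if_distribR cong: if_cong)

lemma index_mult_Lam:
  assumes "A \<in> carrier_mat nr (d i)" and "l < nr" and "m < d i"
  shows "(A * Lam d lam i) $$ (l, m) = A $$ (l, m) * lam i m"
  using assms unfolding Lam_def
  by (simp add: scalar_prod_def if_distrib cong: if_cong)

lemma Lam_mult_unit_vec:
  assumes "l < d i"
  shows "Lam d lam i *\<^sub>v unit_vec (d i) l = lam i l \<cdot>\<^sub>v unit_vec (d i) l"
  using assms unfolding Lam_def
  by (intro eq_vecI) (auto simp: scalar_prod_def unit_vec_def if_distrib cong: if_cong)

lemma eigenvalue_of_diagonalization:
  fixes A V :: "complex mat"
  assumes A: "A \<in> carrier_mat (d i) (d i)" and V: "V \<in> carrier_mat (d i) (d i)"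
    and V_inv: "invertible_mat V" and AV: "A * V = V * Lam d lam i" and l: "l < d i"
  shows "eigenvalue A (lam i l)"
proof -
  let ?e = "unit_vec (d i) l :: complex vec"
  have "A *\<^sub>v (V *\<^sub>v ?e) = (V * Lam d lam i) *\<^sub>v ?e"
    using A V by (simp flip: AV)
  also have "\<dots> = lam i l \<cdot>\<^sub>v (V *\<^sub>v ?e)"
    using V l by (simp add: assoc_mult_mat_vec[OF V Lam_carrier[of d lam i]] Lam_mult_unit_vec mult_mat_vec)
  finally have eigen: "A *\<^sub>v (V *\<^sub>v ?e) = lam i l \<cdot>\<^sub>v (V *\<^sub>v ?e)" .
  have "minv V *\<^sub>v (V *\<^sub>v ?e) = ?e"
    using minv_inverse[OF V V_inv] V by (simp flip: assoc_mult_mat_vec)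
  moreover have "minv V *\<^sub>v 0\<^sub>v (d i) = 0\<^sub>v (d i)"
    using minv_inverse(1)[OF V V_inv] by auto
  moreover have "?e \<noteq> 0\<^sub>v (d i)"
    using l by (metis index_unit_vec(1) index_zero_vec(1) zero_neq_one)
  ultimately have "V *\<^sub>v ?e \<noteq> 0\<^sub>v (d i)"
    by metis
  show ?thesis
    unfolding eigenvalue_def eigenvector_def using A V eigen \<open>V *\<^sub>v ?e \<noteq> 0\<^sub>v (d i)\<close>
    by (intro exI[of _ "V *\<^sub>v ?e"]) auto
qed

lemma eigenvalue_nonzero_if_invertible:
  fixes A :: "complex mat"
  assumes A: "A \<in> carrier_mat k k" and A_inv: "invertible_mat A" and "eigenvalue A e"
  shows "e \<noteq> 0"
proof
  assume "e = 0"
  then obtain v where v: "v \<in> carrier_vec k" "v \<noteq> 0\<^sub>v k" "A *\<^sub>v v = 0 \<cdot>\<^sub>v v"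
    using \<open>eigenvalue A e\<close> A unfolding eigenvalue_def eigenvector_def by auto
  then have Av: "A *\<^sub>v v = 0\<^sub>v k"
    by (intro eq_vecI) auto
  have "v = (minv A * A) *\<^sub>v v"
    using minv_inverse[OF A A_inv] v by simp
  also have "\<dots> = 0\<^sub>v k"
    using minv_inverse(1)[OF A A_inv] A v(1) Av by auto
  finally show False
    using v by simp
qed

lemma assoc_mult_mat_dim:
  fixes A B C :: "'a :: semiring_0 mat"
  assumes "dim_col A = dim_row B" and "dim_col B = dim_row C"
  shows "A * B * C = A * (B * C)"
proof (rule assoc_mult_mat)
  show "A \<in> carrier_mat (dim_row A) (dim_col A)" "B \<in> carrier_mat (dim_col A) (dim_col B)"
    "C \<in> carrier_mat (dim_col B) (dim_col C)"
    using assms by (auto intro: carrier_matI)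
qed

lemma mult_assoc_subst_mat:
  "A * B = C \<Longrightarrow> dim_col A = dim_row B \<Longrightarrow> dim_row Y = dim_col B \<Longrightarrow> A * (B * Y) = C * Y"
  for A B C Y :: "'a :: semiring_0 mat"
  using assoc_mult_mat_dim[of A B Y] by simp

lemma sylvester_equation_solution:
  fixes A B V W F :: "complex mat"
  assumes A: "A \<in> carrier_mat (d i) (d i)" and B: "B \<in> carrier_mat (d j) (d j)"
    and V: "V \<in> carrier_mat (d i) (d i)" and W: "W \<in> carrier_mat (d j) (d j)"
    and F: "F \<in> carrier_mat (d i) (d j)"
    and A_inv: "invertible_mat A" and V_inv: "invertible_mat V" and W_inv: "invertible_mat W"
    and AV: "A * V = V * Lam d lam i" and BW: "B * W = W * Lam d lam j"
    and disjoint: "spectrum A \<inter> spectrum B = {}"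
  defines "X \<equiv> minv A * V * mat (d i) (d j)
      (\<lambda>(l, m). (minv V * F * W) $$ (l, m) * inverse (1 - lam j m / lam i l)) * minv W"
  shows "A * X = X * B + F"
proof -
  define M where "M = minv V * F * W"
  define G where "G = mat (d i) (d j) (\<lambda>(l, m). M $$ (l, m) / (lam i l - lam j m))"
  have lam_nonzero: "lam i l \<noteq> 0" if "l < d i" for l
    using eigenvalue_nonzero_if_invertible[OF A A_inv]
      eigenvalue_of_diagonalization[OF A V V_inv AV that] by blast
  have lam_distinct: "lam i l \<noteq> lam j m" if "l < d i" "m < d j" for l m
    using disjoint eigenvalue_of_diagonalization[OF A V V_inv AV that(1)]
      eigenvalue_of_diagonalization[OF B W W_inv BW that(2)]
    unfolding spectrum_def by auto
  note inv = minv_inverse[OF A A_inv] minv_inverse[OF V V_inv] minv_inverse[OF W W_inv]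
  have M: "M \<in> carrier_mat (d i) (d j)" and G: "G \<in> carrier_mat (d i) (d j)"
    unfolding M_def G_def using inv F W by auto
  note carriers = A B V W F M G inv(1,4,7) Lam_carrier
  note dims = carriers[THEN carrier_matD(1)] carriers[THEN carrier_matD(2)]
  have "mat (d i) (d j) (\<lambda>(l, m). M $$ (l, m) * inverse (1 - lam j m / lam i l))
      = Lam d lam i * G"
  proof (rule eq_matI)
    fix l m assume "l < dim_row (Lam d lam i * G)" "m < dim_col (Lam d lam i * G)"
    then have lm: "l < d i" "m < d j"
      using G by auto
    then show "mat (d i) (d j) (\<lambda>(l, m). M $$ (l, m) * inverse (1 - lam j m / lam i l)) $$ (l, m)
        = (Lam d lam i * G) $$ (l, m)"
      using index_Lam_mult[where d = d and i = i, OF G lm] lam_nonzero[OF lm(1)] lam_distinct[OF lm]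
      unfolding G_def by (simp add: field_simps)
  qed (use G in auto)
  then have "X = minv A * V * (Lam d lam i * G) * minv W"
    unfolding X_def M_def by simp
  also have "\<dots> = V * G * minv W"
    using dims by (simp add: assoc_mult_mat_dim mult_assoc_subst_mat[OF AV[symmetric]]
        mult_assoc_subst_mat[OF inv(3)])
  finally have X_eq: "X = V * G * minv W" .
  have "A * X = V * ((Lam d lam i * G) * minv W)"
    unfolding X_eq using dims by (simp add: assoc_mult_mat_dim mult_assoc_subst_mat[OF AV])
  also have "Lam d lam i * G = G * Lam d lam j + M"
  proof (rule eq_matI)
    fix l m assume "l < dim_row (G * Lam d lam j + M)" "m < dim_col (G * Lam d lam j + M)"
    then have lm: "l < d i" "m < d j"
      using G M by auto
    then have "lam i l - lam j m \<noteq> 0"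
      using lam_distinct by auto
    moreover have "G $$ (l, m) = M $$ (l, m) / (lam i l - lam j m)"
      using lm unfolding G_def by simp
    ultimately show "(Lam d lam i * G) $$ (l, m) = (G * Lam d lam j + M) $$ (l, m)"
      using index_Lam_mult[where d = d and i = i and lam = lam, OF G lm]
        index_mult_Lam[where d = d and i = j and lam = lam, OF G lm] lm G M
      by (simp add: field_simps)
  qed (use G M in auto)
  also have "(G * Lam d lam j + M) * minv W = G * (Lam d lam j * minv W) + M * minv W"
    using carriers by (simp add: add_mult_distrib_mat[of _ "d i" "d j"] assoc_mult_mat_dim)
  also have "Lam d lam j * minv W = minv W * (W * Lam d lam j) * minv W"
    using dims by (simp add: assoc_mult_mat_dim mult_assoc_subst_mat[OF inv(9)])
  also have "\<dots> = minv W * B"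
    using dims by (simp add: assoc_mult_mat_dim inv(8) flip: BW)
  finally show ?thesis
    unfolding X_eq M_def using carriers dims
    by (simp add: mult_add_distrib_mat[of V "d i" "d i" _ "d j"] assoc_mult_mat_dim
        mult_assoc_subst_mat[OF inv(5)] inv(8))
qed

lemma mult_pow_mat_Suc:
  assumes "A \<in> carrier_mat k k"
  shows "A * A ^\<^sub>m t = A ^\<^sub>m Suc t"
proof (induction t)
  case (Suc t)
  have "A * A ^\<^sub>m Suc t = (A * A ^\<^sub>m t) * A"
    using assms by (simp add: assoc_mult_mat[of A k k "A ^\<^sub>m t" k A k])
  then show ?case
    using Suc by simp
qed (use assms in simp)

lemma mult_mat_vec_pow_Suc:
  assumes A: "A \<in> carrier_mat k k" and v: "v \<in> carrier_vec k"
  shows "A *\<^sub>v ((A ^\<^sub>m t) *\<^sub>v v) = (A ^\<^sub>m Suc t) *\<^sub>v v"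
  using assoc_mult_mat_vec[OF A pow_carrier_mat[OF A] v] by (simp add: mult_pow_mat_Suc[OF A])

lemma minus_one_power_diff:
  "j < i \<Longrightarrow> (-1 :: 'a :: ring_1) ^ (i - j) = - ((-1) ^ (i - 1 - j))"
  by (metis Suc_diff_Suc diff_Suc_1 diff_commute mult_minus1 power_Suc)

lemma uminus_smult_vec: "(- a) \<cdot>\<^sub>v v = - (a \<cdot>\<^sub>v v)"
  for a :: "'a :: ring"
  by (intro eq_vecI) auto

lemma vsum_Nil [simp]: "vsum dm f [] = 0\<^sub>v dm"
  unfolding vsum_def by simp

lemma vsum_Cons [simp]: "vsum dm f (j # js) = f j + vsum dm f js"
  unfolding vsum_def by simp

lemma vsum_carrier:
  "(\<And>j. j \<in> set js \<Longrightarrow> f j \<in> carrier_vec dm) \<Longrightarrow> vsum dm f js \<in> carrier_vec dm"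
  by (induction js) auto

lemma vsum_snoc:
  assumes "\<And>j. j \<in> set (js @ [k]) \<Longrightarrow> f j \<in> carrier_vec dm"
  shows "vsum dm f (js @ [k]) = vsum dm f js + f k"
  using assms
proof (induction js)
  case (Cons j js)
  have "f j \<in> carrier_vec dm" "vsum dm f js \<in> carrier_vec dm" "f k \<in> carrier_vec dm"
    using Cons.prems by (auto intro!: vsum_carrier)
  moreover have "vsum dm f (js @ [k]) = vsum dm f js + f k"
    using Cons by simp
  ultimately show ?case
    by (simp add: assoc_add_vec)
qed simp

lemma vsum_add:
  assumes "\<And>j. j \<in> set js \<Longrightarrow> f j \<in> carrier_vec dm" "\<And>j. j \<in> set js \<Longrightarrow> g j \<in> carrier_vec dm"
  shows "vsum dm (\<lambda>j. f j + g j) js = vsum dm f js + vsum dm g js"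
  using assms
proof (induction js)
  case (Cons j js)
  have "f j \<in> carrier_vec dm" "g j \<in> carrier_vec dm"
    "vsum dm f js \<in> carrier_vec dm" "vsum dm g js \<in> carrier_vec dm"
    using Cons.prems by (auto intro!: vsum_carrier)
  moreover have "vsum dm (\<lambda>j. f j + g j) js = vsum dm f js + vsum dm g js"
    using Cons by simp
  ultimately show ?case
    by (intro eq_vecI) (simp_all add: carrier_vecD)
qed simp

lemma vsum_uminus:
  assumes "\<And>j. j \<in> set js \<Longrightarrow> f j \<in> carrier_vec dm"
  shows "vsum dm (\<lambda>j. - f j) js = - vsum dm f js"
  using assms
proof (induction js)
  case (Cons j js)
  have "f j \<in> carrier_vec dm" "vsum dm f js \<in> carrier_vec dm"
    using Cons.prems by (auto intro!: vsum_carrier)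
  moreover have "vsum dm (\<lambda>j. - f j) js = - vsum dm f js"
    using Cons by simp
  ultimately show ?case
    by (intro eq_vecI) (simp_all add: carrier_vecD)
qed (intro eq_vecI, simp_all)

lemma mult_mat_vec_vsum:
  assumes M: "M \<in> carrier_mat nr dm" and "\<And>j. j \<in> set js \<Longrightarrow> f j \<in> carrier_vec dm"
  shows "M *\<^sub>v vsum dm f js = vsum nr (\<lambda>j. M *\<^sub>v f j) js"
  using assms(2)
proof (induction js)
  case (Cons j js)
  then have "f j \<in> carrier_vec dm" "vsum dm f js \<in> carrier_vec dm"
    by (auto intro!: vsum_carrier)
  with Cons M show ?case
    by (simp add: mult_add_distrib_mat_vec)
qed (use M in auto)

lemma Lin_first_block: "Lin n L C y 1 = L 1 *\<^sub>v y 1"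
  unfolding Lin_def by simp

lemma Lin_later_block: "2 \<le> i \<Longrightarrow> i \<le> n \<Longrightarrow> Lin n L C y i = L i *\<^sub>v y i + C i *\<^sub>v y (i - 1)"
  unfolding Lin_def by simp

locale bidiagonal_system =
  fixes n :: nat and d :: "nat \<Rightarrow> nat"
    and L C V :: "nat \<Rightarrow> complex mat" and lam :: "nat \<Rightarrow> nat \<Rightarrow> complex"
  assumes L_dim: "\<forall>i \<in> {1..n}. L i \<in> carrier_mat (d i) (d i)"
    and C_dim: "\<forall>i \<in> {2..n}. C i \<in> carrier_mat (d i) (d (i - 1))"
    and V_dim: "\<forall>i \<in> {1..n}. V i \<in> carrier_mat (d i) (d i)"
    and L_inv: "\<forall>i \<in> {1..n}. invertible_mat (L i)"
    and V_inv: "\<forall>i \<in> {1..n}. invertible_mat (V i)"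
    and diag: "\<forall>i \<in> {1..n}. L i * V i = V i * Lam d lam i"
    and spec: "\<forall>i \<in> {1..n}. \<forall>j \<in> {1..n}. i \<noteq> j \<longrightarrow> spectrum (L i) \<inter> spectrum (L j) = {}"
begin

abbreviation D :: "nat \<Rightarrow> nat \<Rightarrow> complex mat" where
  "D \<equiv> Dmat d L C V lam"

abbreviation p :: "nat \<Rightarrow> (nat \<Rightarrow> complex vec) \<Rightarrow> complex vec" where
  "p \<equiv> pert d L C V lam"

lemma L_carrier: "1 \<le> i \<Longrightarrow> i \<le> n \<Longrightarrow> L i \<in> carrier_mat (d i) (d i)"
  using L_dim by simp

lemma Dmat_diag: "1 \<le> i \<Longrightarrow> D i i = 1\<^sub>m (d i)"
  by (cases i) auto

lemma Dmat_off_diag: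
  "1 \<le> i \<Longrightarrow> j \<noteq> i \<Longrightarrow> D i j = minv (L i) * V i * mat (d i) (d j)
     (\<lambda>(l, m). (minv (V i) * C i * D (i - 1) j * V j) $$ (l, m) * inverse (1 - lam j m / lam i l))
     * minv (V j)"
  by (cases i) (auto simp: Let_def)

lemma Dmat_carrier:
  assumes "1 \<le> j" "j \<le> i" "i \<le> n"
  shows "D i j \<in> carrier_mat (d i) (d j)"
proof (cases "j = i")
  case False
  have "minv (L i) \<in> carrier_mat (d i) (d i)" "minv (V j) \<in> carrier_mat (d j) (d j)"
    using assms L_dim L_inv V_dim V_inv minv_inverse(1) by auto
  then show ?thesis
    using Dmat_off_diag[OF _ False] assms V_dim by auto
qed (use assms Dmat_diag in auto)

lemma Dmat_sylvester:
  assumes i: "2 \<le> i" "i \<le> n" and j: "1 \<le> j" "j < i"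
  shows "L i * D i j = D i j * L j + C i * D (i - 1) j"
proof -
  have carriers: "L i \<in> carrier_mat (d i) (d i)" "L j \<in> carrier_mat (d j) (d j)"
    "V i \<in> carrier_mat (d i) (d i)" "V j \<in> carrier_mat (d j) (d j)"
    "minv (V i) \<in> carrier_mat (d i) (d i)" "C i \<in> carrier_mat (d i) (d (i - 1))"
    "D (i - 1) j \<in> carrier_mat (d (i - 1)) (d j)"
    using assms L_dim V_dim V_inv C_dim Dmat_carrier minv_inverse(1) by auto
  then have "minv (V i) * C i * D (i - 1) j * V j = minv (V i) * (C i * D (i - 1) j) * V j"
    by simp
  then show ?thesis
    using Dmat_off_diag[of i j] sylvester_equation_solution[where d = d and i = i and j = j, OF carriers(1,2,3,4)
        mult_carrier_mat[OF carriers(6,7)]] assms L_inv V_inv diag spec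
    by auto
qed

definition mode_term :: "(nat \<Rightarrow> complex vec) \<Rightarrow> nat \<Rightarrow> nat \<Rightarrow> nat \<Rightarrow> complex vec" where
  "mode_term x t i j = (-1) ^ (i - j) \<cdot>\<^sub>v (D i j *\<^sub>v ((L j ^\<^sub>m t) *\<^sub>v p j x))"

context
  fixes x :: "nat \<Rightarrow> complex vec"
  assumes x: "\<forall>k \<in> {1..n}. x k \<in> carrier_vec (d k)"
begin

lemma pert_carrier:
  assumes "1 \<le> i" "i \<le> n"
  shows "p i x \<in> carrier_vec (d i)"
  using assms
proof (induction i rule: less_induct)
  case (less i)
  have "vsum (d i) (\<lambda>j. (-1) ^ (i - 1 - j) \<cdot>\<^sub>v (D i j *\<^sub>v p j x)) [1..<i] \<in> carrier_vec (d i)"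
    using less by (intro vsum_carrier) (auto intro!: mult_mat_vec_carrier[OF Dmat_carrier])
  then show ?case
    using x less.prems by (subst pert.simps) auto
qed


lemma mode_term_carrier:
  assumes "1 \<le> j" "j \<le> i" "i \<le> n"
  shows "mode_term x t i j \<in> carrier_vec (d i)"
proof -
  have "D i j \<in> carrier_mat (d i) (d j)" "L j ^\<^sub>m t \<in> carrier_mat (d j) (d j)"
    "p j x \<in> carrier_vec (d j)"
    using assms Dmat_carrier L_dim pert_carrier by auto
  then show ?thesis
    unfolding mode_term_def by simp
qed

lemma vsum_mode_terms:
  assumes "1 \<le> i" "i \<le> n"
  shows "vsum (d i) (mode_term x t i) [1..<i+1]
    = vsum (d i) (mode_term x t i) [1..<i] + (L i ^\<^sub>m t) *\<^sub>v p i x"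
proof -
  have "vsum (d i) (mode_term x t i) ([1..<i] @ [i])
      = vsum (d i) (mode_term x t i) [1..<i] + mode_term x t i i"
    using assms mode_term_carrier by (intro vsum_snoc) auto
  moreover have "(L i ^\<^sub>m t) *\<^sub>v p i x \<in> carrier_vec (d i)"
    using pert_carrier[OF assms] L_carrier[OF assms] by (intro mult_mat_vec_carrier) auto
  then have "mode_term x t i i = (L i ^\<^sub>m t) *\<^sub>v p i x"
    unfolding mode_term_def using assms Dmat_diag by simp
  ultimately show ?thesis
    using assms by simp
qed

lemma mode_terms_initial:
  assumes "1 \<le> i" "i \<le> n"
  shows "vsum (d i) (mode_term x 0 i) [1..<i+1] = x i"
proof -
  define P where "P j = (-1) ^ (i - 1 - j) \<cdot>\<^sub>v (D i j *\<^sub>v p j x)" for j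
  have P: "P j \<in> carrier_vec (d i)" if "j \<in> set [1..<i]" for j
  proof -
    have "D i j \<in> carrier_mat (d i) (d j)" "p j x \<in> carrier_vec (d j)"
      using that assms Dmat_carrier pert_carrier by auto
    then show ?thesis
      unfolding P_def by simp
  qed
  have "mode_term x 0 i j = - P j" if "j \<in> set [1..<i]" for j
  proof -
    have "p j x \<in> carrier_vec (d j)" "L j \<in> carrier_mat (d j) (d j)"
      using that assms pert_carrier L_carrier by auto
    then show ?thesis
      unfolding mode_term_def P_def using that minus_one_power_diff[of j i, where 'a = complex]
      by (simp add: uminus_smult_vec)
  qed
  then have "vsum (d i) (mode_term x 0 i) [1..<i] = vsum (d i) (\<lambda>j. - P j) [1..<i]"
    by (intro vsum_cong) simp_all
  also have "\<dots> = - vsum (d i) P [1..<i]"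
    using P by (rule vsum_uminus)
  finally have "vsum (d i) (mode_term x 0 i) [1..<i] = - vsum (d i) P [1..<i]" .
  moreover have "p i x = x i + vsum (d i) P [1..<i]"
    unfolding P_def using assms x by (subst pert.simps) (auto simp: vsum_def)
  moreover have "vsum (d i) (mode_term x 0 i) [1..<i+1] = vsum (d i) (mode_term x 0 i) [1..<i] + p i x"
    using vsum_mode_terms[OF assms, of 0] L_carrier[OF assms] pert_carrier[OF assms] by simp
  moreover have "dim_vec (x i) = d i" "dim_vec (vsum (d i) P [1..<i]) = d i"
    using assms x vsum_carrier[of "[1..<i]" P] P by auto
  ultimately show ?thesis
    by (intro eq_vecI) simp_all
qed

lemma mode_term_step:
  assumes i: "2 \<le> i" "i \<le> n" and j: "1 \<le> j" "j < i"
  shows "L i *\<^sub>v mode_term x t i j + C i *\<^sub>v mode_term x t (i - 1) j = mode_term x (Suc t) i j"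
proof -
  define w where "w = (L j ^\<^sub>m t) *\<^sub>v p j x"
  define s :: complex where "s = (-1) ^ (i - j)"
  have Li: "L i \<in> carrier_mat (d i) (d i)" and Lj: "L j \<in> carrier_mat (d j) (d j)"
    and Ci: "C i \<in> carrier_mat (d i) (d (i - 1))"
    and Dij: "D i j \<in> carrier_mat (d i) (d j)" and Dij': "D (i - 1) j \<in> carrier_mat (d (i - 1)) (d j)"
    using assms L_carrier C_dim Dmat_carrier by auto
  have w: "w \<in> carrier_vec (d j)"
    unfolding w_def using assms pert_carrier Lj by (intro mult_mat_vec_carrier) auto
  have "L i *\<^sub>v mode_term x t i j = s \<cdot>\<^sub>v ((L i * D i j) *\<^sub>v w)"
    unfolding mode_term_def s_def w_def[symmetric] using Li Dij w by (simp add: mult_mat_vec)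
  also have "\<dots> = s \<cdot>\<^sub>v (D i j *\<^sub>v (L j *\<^sub>v w) + C i *\<^sub>v (D (i - 1) j *\<^sub>v w))"
    using Dmat_sylvester[OF assms] Li Lj Ci Dij Dij' w
    by (simp add: add_mult_distrib_mat_vec[of _ "d i" "d j"])
  finally have "L i *\<^sub>v mode_term x t i j
      = s \<cdot>\<^sub>v (D i j *\<^sub>v (L j *\<^sub>v w)) + s \<cdot>\<^sub>v (C i *\<^sub>v (D (i - 1) j *\<^sub>v w))"
    using Lj Ci Dij Dij' w by (simp add: smult_add_distrib_vec[of _ "d i"])
  moreover have "C i *\<^sub>v mode_term x t (i - 1) j = - (s \<cdot>\<^sub>v (C i *\<^sub>v (D (i - 1) j *\<^sub>v w)))"
    unfolding mode_term_def s_def w_def[symmetric] using j Ci Dij' w minus_one_power_diff[of j i, where 'a = complex]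
    by (simp add: mult_mat_vec uminus_smult_vec)
  moreover have "mode_term x (Suc t) i j = s \<cdot>\<^sub>v (D i j *\<^sub>v (L j *\<^sub>v w))"
    unfolding mode_term_def s_def w_def using mult_mat_vec_pow_Suc[OF Lj] assms pert_carrier by simp
  ultimately show ?thesis
    using Lj Ci Dij Dij' w by (intro eq_vecI) simp_all
qed

lemma Lin_pow_eq_vsum_mode_terms:
  assumes "1 \<le> i" "i \<le> n"
  shows "(Lin n L C ^^ t) x i = vsum (d i) (mode_term x t i) [1..<i+1]"
  using assms
proof (induction t arbitrary: i)
  case 0
  then show ?case
    using mode_terms_initial by simp
next
  case (Suc t)
  define y where "y = (Lin n L C ^^ t) x"
  define S where "S = vsum (d i) (mode_term x t i) [1..<i]"
  have Li: "L i \<in> carrier_mat (d i) (d i)" and pi: "p i x \<in> carrier_vec (d i)"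
    using Suc.prems L_carrier pert_carrier by auto
  have S: "S \<in> carrier_vec (d i)"
    unfolding S_def using Suc.prems mode_term_carrier by (intro vsum_carrier) auto
  have yi: "y i = S + (L i ^\<^sub>m t) *\<^sub>v p i x"
    unfolding y_def S_def using Suc vsum_mode_terms by simp
  have step: "(Lin n L C ^^ Suc t) x i
      = vsum (d i) (mode_term x (Suc t) i) [1..<i] + (L i ^\<^sub>m Suc t) *\<^sub>v p i x"
  proof (cases "i = 1")
    case True
    have "(Lin n L C ^^ Suc t) x i = L i *\<^sub>v y i"
      unfolding y_def using True Lin_first_block by simp
    also have "y i = (L i ^\<^sub>m t) *\<^sub>v p i x"
      using yi True mult_mat_vec_carrier[OF pow_carrier_mat[OF Li] pi] by (simp add: S_def)
    finally show ?thesis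
      using True mult_mat_vec_pow_Suc[OF Li pi]
        mult_mat_vec_carrier[OF pow_carrier_mat[OF Li, of "Suc t"] pi]
      by simp
  next
    case False
    then have i: "2 \<le> i" "i \<le> n"
      using Suc.prems by auto
    define S' where "S' = vsum (d (i - 1)) (mode_term x t (i - 1)) [1..<i]"
    have Ci: "C i \<in> carrier_mat (d i) (d (i - 1))"
      using i C_dim by simp
    have S': "S' \<in> carrier_vec (d (i - 1))"
      unfolding S'_def using i mode_term_carrier by (intro vsum_carrier) auto
    have X: "(L i ^\<^sub>m t) *\<^sub>v p i x \<in> carrier_vec (d i)"
      using mult_mat_vec_carrier[OF pow_carrier_mat[OF Li] pi] .
    have "y (i - 1) = S'"
      unfolding y_def S'_def using Suc.IH[of "i - 1"] i by simp
    then have "(Lin n L C ^^ Suc t) x i = L i *\<^sub>v (S + (L i ^\<^sub>m t) *\<^sub>v p i x) + C i *\<^sub>v S'"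
      unfolding y_def using Lin_later_block[OF i] yi i by (simp add: y_def)
    also have "\<dots> = (L i *\<^sub>v S + C i *\<^sub>v S') + L i *\<^sub>v ((L i ^\<^sub>m t) *\<^sub>v p i x)"
      unfolding mult_add_distrib_mat_vec[OF Li S X] using Li Ci S S' X
      by (intro eq_vecI) simp_all
    also have "L i *\<^sub>v S + C i *\<^sub>v S'
        = vsum (d i) (\<lambda>j. L i *\<^sub>v mode_term x t i j + C i *\<^sub>v mode_term x t (i - 1) j) [1..<i]"
    proof -
      have T: "mode_term x t i j \<in> carrier_vec (d i)"
        and T': "mode_term x t (i - 1) j \<in> carrier_vec (d (i - 1))" if "j \<in> set [1..<i]" for j
        using that i mode_term_carrier by auto
      have "L i *\<^sub>v S = vsum (d i) (\<lambda>j. L i *\<^sub>v mode_term x t i j) [1..<i]"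
        unfolding S_def using Li T by (rule mult_mat_vec_vsum)
      moreover have "C i *\<^sub>v S' = vsum (d i) (\<lambda>j. C i *\<^sub>v mode_term x t (i - 1) j) [1..<i]"
        unfolding S'_def using Ci T' by (rule mult_mat_vec_vsum)
      ultimately show ?thesis
        using vsum_add[of "[1..<i]" "\<lambda>j. L i *\<^sub>v mode_term x t i j" "d i"
            "\<lambda>j. C i *\<^sub>v mode_term x t (i - 1) j"] Li Ci T T'
        by simp
    qed
    also have "\<dots> = vsum (d i) (mode_term x (Suc t) i) [1..<i]"
      using i mode_term_step by (intro vsum_cong) auto
    finally show ?thesis
      using mult_mat_vec_pow_Suc[OF Li pi] by simp
  qed
  then show ?case
    using Suc.prems vsum_mode_terms by simp
qed

end

end

theorem lemma3:
  fixes n :: nat and d :: "nat \<Rightarrow> nat" and N :: "nat \<Rightarrow> complex vec \<Rightarrow> real"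
    and L C V :: "nat \<Rightarrow> complex mat" and lam :: "nat \<Rightarrow> nat \<Rightarrow> complex"
  assumes n2: "n \<ge> 2"
    and d_pos: "\<forall>i \<in> {1..n}. d i \<ge> 1"
    and norms: "\<forall>i \<in> {1..n}. is_norm_on (d i) (N i)"
    and L_dim: "\<forall>i \<in> {1..n}. L i \<in> carrier_mat (d i) (d i)"
    and C_dim: "\<forall>i \<in> {2..n}. C i \<in> carrier_mat (d i) (d (i - 1))"
    and V_dim: "\<forall>i \<in> {1..n}. V i \<in> carrier_mat (d i) (d i)"
    and L_inv: "\<forall>i \<in> {1..n}. invertible_mat (L i)"
    and V_inv: "\<forall>i \<in> {1..n}. invertible_mat (V i)"
    and diag: "\<forall>i \<in> {1..n}. L i * V i = V i * Lam d lam i"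
    and spec: "\<forall>i \<in> {1..n}. \<forall>j \<in> {1..n}. i \<noteq> j \<longrightarrow> spectrum (L i) \<inter> spectrum (L j) = {}"
    and norm_incr: "\<forall>i \<in> {1..<n}. opnorm (d i) (N i) (L i) < opnorm (d (i + 1)) (N (i + 1)) (L (i + 1))"
    and norm_le1: "opnorm (d n) (N n) (L n) \<le> 1"
    and i_rng: "i \<in> {2..n}"
    and x_dim: "\<forall>k \<in> {1..n}. x k \<in> carrier_vec (d k)"
  shows "Proj i ((Lin n L C ^^ t) x) =
         vsum (d i) (\<lambda>j. ((-1) ^ (i - j)) \<cdot>\<^sub>v (Dmat d L C V lam i j *\<^sub>v ((L j ^\<^sub>m t) *\<^sub>v pert d L C V lam j x))) [1..<i+1]"
proof -
  interpret bidiagonal_system n d L C V lam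
    using L_dim C_dim V_dim L_inv V_inv diag spec by unfold_locales
  show ?thesis
    using Lin_pow_eq_vsum_mode_terms[OF x_dim, of i t] i_rng
    unfolding Proj_def mode_term_def by simp
qed

end
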